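(* Let $\theta_\ast>0$ and consider the Poisson mixture model in which $X_1,\dots,X_n$ are i.i.d. with probability mass function $h_Q(x)=\int_0^{\theta_\ast}\frac{e^{-\theta}\theta^x}{x!}\,\mathrm dQ(\theta)$, $x\in\mathbb Z^{\ge0}$, with $Q\in\mathcal P([0,\theta_\ast])$. Let $\epsilon(n)=\log\log n/\log n$. Then there exists a constant $C>0$ such that for all sufficiently large $n$ and every $\delta\in(0,1)$, $$\chi^2(h^{\rm obs}\Vert h_Q)\le Cn^{-1}(\log n)^{\theta_\ast+4}\delta^{-1-\epsilon(n)}$$ holds with probability at least $1-\delta$.
   Context: $\mathcal P([0,\theta_\ast])$ is the set of probability measures on $[0,\theta_\ast]$. The empirical distribution is $h^{\rm obs}(x)=\frac1n\sum_{i=1}^n\mathbf 1(X_i=x)$, and $\chi^2(p\Vert q)=\sum_{x\ge0}(p(x)-q(x))^2/q(x)$. *)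

theory Defs
  imports "HOL-Probability.Probability"
begin

definition poisson_mix :: "real measure \<Rightarrow> nat \<Rightarrow> real" where
  "poisson_mix Q x = (\<integral>t. exp (- t) * t ^ x / fact x \<partial>Q)"

text \<open>The mixture as a pmf (a genuine pmf whenever Q is a probability measure on [0, theta]).\<close>
definition poisson_mix_pmf :: "real measure \<Rightarrow> nat pmf" where
  "poisson_mix_pmf Q = embed_pmf (poisson_mix Q)"

definition h_obs :: "nat \<Rightarrow> (nat \<Rightarrow> nat) \<Rightarrow> nat \<Rightarrow> real" where
  "h_obs n X x = real (card {i. i < n \<and> X i = x}) / real n"

definition chi2 :: "(nat \<Rightarrow> real) \<Rightarrow> (nat \<Rightarrow> real) \<Rightarrow> ennreal" where
  "chi2 p q = (\<Sum>x. if q x = 0 then (if p x = 0 then 0 else \<top>)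
                    else ennreal ((p x - q x)^2 / q x))"

end

theory Submission
  imports Defs
begin

(* Outside the event that some observation is at least K, the chi-square divergence of the
   empirical distribution splits into a truncated statistic over the cells below K plus the
   mass of h_Q beyond K. Each cell count is binomial, so the truncated statistic has
   expectation at most K/n and Markov's inequality controls it; a union bound controls a large
   observation. Since h_Q(x) <= theta^x/x!, a Chernoff bound makes the tail mass at most
   exp(e theta) e^-K, so K ~ log(n/delta) suffices. The resulting bound
   (log n + log(1/delta))/(n delta) is dominated by the stated rate because
   log n + log(1/delta) <= log n * delta^-eps(n). *)

lemma power_div_fact_sums_exp: "(\<lambda>k. y ^ k / fact k) sums exp (y::real)"
  using exp_converges[of y] by (simp add: field_simps)

lemma power_div_fact_le_exp:
  fixes y :: real
  assumes "0 \<le> y"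
  shows "y ^ k / fact k \<le> exp y"
proof -
  have "(\<Sum>i\<in>{k}. y ^ i / fact i) \<le> (\<Sum>i. y ^ i / fact i)"
    using assms power_div_fact_sums_exp[of y] by (intro sum_le_suminf) (auto simp: sums_iff)
  thus ?thesis using power_div_fact_sums_exp[of y] by (simp add: sums_iff)
qed

lemma poisson_weights_sums_1: "(\<lambda>k. exp (- t) * t ^ k / fact k) sums (1::real)"
  using sums_mult[OF power_div_fact_sums_exp[of t], of "exp (- t)"]
  by (simp add: mult_exp_exp)

lemma poisson_weight_le_1:
  fixes t :: real
  assumes "0 \<le> t"
  shows "exp (- t) * t ^ k / fact k \<le> 1"
  using power_div_fact_le_exp[OF assms, of k] by (simp add: exp_minus field_simps)

lemma measure_pmf_atLeast_le_exp:
  fixes p :: "nat pmf" and \<theta> :: real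
  assumes "0 \<le> \<theta>" and le: "\<And>k. pmf p k \<le> \<theta> ^ k / fact k"
  shows "measure_pmf.prob p {K..} \<le> exp (exp 1 * \<theta>) * exp (- real K)"
proof -
  have "ennreal (measure_pmf.prob p {K..}) = (\<integral>\<^sup>+ k. indicator {K..} k \<partial>p)"
    by (simp add: measure_pmf.emeasure_eq_measure)
  \<comment> \<open>Chernoff bound: the exponential moment of p is at most the sum of (e \<theta>)^k / k!.\<close>
  also have "\<dots> \<le> (\<integral>\<^sup>+ k. ennreal (exp (real k - real K)) \<partial>p)"
    by (intro nn_integral_mono) (auto simp: indicator_def)
  also have "\<dots> = (\<Sum>k. ennreal (pmf p k * exp (real k - real K)))"
    by (simp add: nn_integral_measure_pmf nn_integral_count_space_nat ennreal_mult')
  also have "\<dots> \<le> (\<Sum>k. ennreal ((exp 1 * \<theta>) ^ k / fact k * exp (- real K)))"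
  proof (intro suminf_le summableI ennreal_leI)
    fix k
    have "pmf p k * exp (real k) \<le> \<theta> ^ k / fact k * exp 1 ^ k"
      using le[of k] assms(1) by (intro mult_mono) (auto simp: exp_of_nat_mult[symmetric])
    thus "pmf p k * exp (real k - real K) \<le> (exp 1 * \<theta>) ^ k / fact k * exp (- real K)"
      by (simp add: exp_diff exp_minus field_simps power_mult_distrib)
  qed
  also have "\<dots> = ennreal (exp (exp 1 * \<theta>) * exp (- real K))"
    using assms(1) by (intro suminf_ennreal_eq sums_mult2 power_div_fact_sums_exp) simp
  finally show ?thesis by (simp add: ennreal_le_iff)
qed

context
  fixes Q :: "real measure"
  assumes Q: "prob_space Q" "sets Q = sets borel" and nonneg: "AE t in Q. 0 \<le> t"
begin

lemma integrable_poisson_weight: "integrable Q (\<lambda>t. exp (- t) * t ^ k / fact k)"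
proof (rule finite_measure.integrable_const_bound)
  show "finite_measure Q" using Q(1) by (rule prob_space.finite_measure)
  show "AE t in Q. norm (exp (- t) * t ^ k / fact k) \<le> 1"
    using nonneg by eventually_elim (use poisson_weight_le_1 in auto)
qed (simp add: measurable_cong_sets[OF Q(2) refl])

lemma ennreal_poisson_mix:
  "ennreal (poisson_mix Q k) = (\<integral>\<^sup>+ t. ennreal (exp (- t) * t ^ k / fact k) \<partial>Q)"
  unfolding poisson_mix_def
  by (rule nn_integral_eq_integral[symmetric, OF integrable_poisson_weight])
     (use nonneg in \<open>eventually_elim, simp\<close>)

lemma poisson_mix_nonneg: "0 \<le> poisson_mix Q k"
  unfolding poisson_mix_def
  by (rule integral_nonneg_AE) (use nonneg in \<open>eventually_elim, simp\<close>)

lemma pmf_poisson_mix_pmf: "pmf (poisson_mix_pmf Q) = poisson_mix Q"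
proof -
  have "(\<integral>\<^sup>+ k. ennreal (poisson_mix Q k) \<partial>count_space UNIV)
      = (\<Sum>k. \<integral>\<^sup>+ t. ennreal (exp (- t) * t ^ k / fact k) \<partial>Q)"
    by (simp add: nn_integral_count_space_nat ennreal_poisson_mix)
  also have "\<dots> = (\<integral>\<^sup>+ t. (\<Sum>k. ennreal (exp (- t) * t ^ k / fact k)) \<partial>Q)"
    by (rule nn_integral_suminf[symmetric]) (simp add: measurable_cong_sets[OF Q(2) refl])
  also have "\<dots> = (\<integral>\<^sup>+ t. 1 \<partial>Q)"
  proof (rule nn_integral_cong_AE)
    show "AE t in Q. (\<Sum>k. ennreal (exp (- t) * t ^ k / fact k)) = 1"
      using nonneg
      by eventually_elim (subst suminf_ennreal_eq[OF _ poisson_weights_sums_1], auto)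
  qed
  also have "\<dots> = 1" using Q(1) by (simp add: prob_space.emeasure_space_1)
  finally show ?thesis
    unfolding poisson_mix_pmf_def by (intro ext pmf_embed_pmf poisson_mix_nonneg)
qed

lemma poisson_mix_le_power_div_fact:
  assumes "AE t in Q. t \<le> \<theta>"
  shows "poisson_mix Q k \<le> \<theta> ^ k / fact k"
  unfolding poisson_mix_def
proof (rule prob_space.integral_le_const[OF Q(1) integrable_poisson_weight])
  show "AE t in Q. exp (- t) * t ^ k / fact k \<le> \<theta> ^ k / fact k"
    using nonneg assms
  proof eventually_elim
    case (elim t)
    have "exp (- t) * t ^ k \<le> 1 * \<theta> ^ k"
      using elim by (intro mult_mono power_mono) auto
    thus ?case by (simp add: divide_right_mono)
  qed
qed

lemma measure_poisson_mix_pmf_atLeast_le: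
  assumes "0 \<le> \<theta>" "AE t in Q. t \<le> \<theta>"
  shows "measure_pmf.prob (poisson_mix_pmf Q) {K..} \<le> exp (exp 1 * \<theta>) * exp (- real K)"
  using assms
  by (intro measure_pmf_atLeast_le_exp) (simp_all add: pmf_poisson_mix_pmf poisson_mix_le_power_div_fact)

end

lemma measure_Pi_pmf_component:
  assumes "finite I" "i \<in> I"
  shows "measure_pmf.prob (Pi_pmf I d p) {X. X i \<in> A} = measure_pmf.prob (p i) A"
proof -
  have "measure_pmf.prob (Pi_pmf I d p) {X. X i \<in> A}
      = measure_pmf.prob (map_pmf (\<lambda>X. X i) (Pi_pmf I d p)) A"
    by (simp add: vimage_def)
  thus ?thesis using assms by (simp add: Pi_pmf_component)
qed

lemma measure_Pi_pmf_two_components: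
  assumes "finite I" "i \<in> I" "j \<in> I" "i \<noteq> j"
  shows "measure_pmf.prob (Pi_pmf I d p) {X. X i \<in> A \<and> X j \<in> B}
       = measure_pmf.prob (p i) A * measure_pmf.prob (p j) B"
proof -
  define S where "S k = (if k = i then A else if k = j then B else UNIV)" for k
  have "{X. X i \<in> A \<and> X j \<in> B} = Pi I S"
    using assms(2-4) by (auto simp: S_def Pi_def)
  hence "measure_pmf.prob (Pi_pmf I d p) {X. X i \<in> A \<and> X j \<in> B}
       = (\<Prod>k\<in>I. measure_pmf.prob (p k) (S k))"
    using assms(1) by (simp add: measure_Pi_pmf_Pi)
  also have "\<dots> = (\<Prod>k\<in>{i, j}. measure_pmf.prob (p k) (S k))"
    using assms by (intro prod.mono_neutral_right) (auto simp: S_def)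
  finally show ?thesis using assms(4) by (simp add: S_def)
qed

lemma measure_Pi_pmf_ex_component_le:
  assumes "finite I"
  shows "measure_pmf.prob (Pi_pmf I d (\<lambda>_. p)) {X. \<exists>i\<in>I. X i \<in> A}
       \<le> card I * measure_pmf.prob p A"
proof -
  have "measure_pmf.prob (Pi_pmf I d (\<lambda>_. p)) (\<Union>i\<in>I. {X. X i \<in> A})
      \<le> (\<Sum>i\<in>I. measure_pmf.prob (Pi_pmf I d (\<lambda>_. p)) {X. X i \<in> A})"
    using assms by (intro measure_pmf.finite_measure_subadditive_finite) auto
  also have "\<dots> = (\<Sum>i\<in>I. measure_pmf.prob p A)"
    using assms by (intro sum.cong refl measure_Pi_pmf_component)
  finally show ?thesis by (simp add: Union_eq)
qed

lemma h_obs_eq_sum_indicator: "h_obs n X y = (\<Sum>i<n. indicator {y} (X i)) / n"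
proof -
  have "(\<Sum>i<n. indicator {y} (X i)) = real (card {i. i < n \<and> X i = y})"
    by (simp add: indicator_def sum.If_cases lessThan_def Collect_conj_eq Int_commute)
  thus ?thesis by (simp add: h_obs_def)
qed

lemma h_obs_nonneg: "0 \<le> h_obs n X y"
  by (simp add: h_obs_def)

lemma h_obs_le_1: "h_obs n X y \<le> 1"
proof -
  have "card {i. i < n \<and> X i = y} \<le> card {..<n}" by (intro card_mono) auto
  thus ?thesis by (auto simp: h_obs_def divide_le_eq_1)
qed

lemma h_obs_eq_0: "(\<And>i. i < n \<Longrightarrow> X i \<noteq> y) \<Longrightarrow> h_obs n X y = 0"
  by (simp add: h_obs_def)

lemma integrable_Pi_pmf_centered_indicators:
  "integrable (Pi_pmf I d (\<lambda>_. p))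
     (\<lambda>X. (indicator {y} (X i) - pmf p y) * (indicator {y} (X j) - pmf p y))"
proof (rule measure_pmf.integrable_const_bound[where B=1])
  have "\<bar>indicator {y} x - pmf p y\<bar> \<le> 1" for x
    using pmf_le_1[of p y] by (auto simp: indicator_def)
  thus "AE X in Pi_pmf I d (\<lambda>_. p).
          norm ((indicator {y} (X i) - pmf p y) * (indicator {y} (X j) - pmf p y)) \<le> 1"
    by (auto simp: abs_mult intro!: AE_I2 mult_le_one)
qed simp

lemma expectation_Pi_pmf_centered_indicators:
  assumes "finite I" "i \<in> I" "j \<in> I"
  shows "measure_pmf.expectation (Pi_pmf I d (\<lambda>_. p))
           (\<lambda>X. (indicator {y} (X i) - pmf p y) * (indicator {y} (X j) - pmf p y))
       = (if i = j then pmf p y * (1 - pmf p y) else 0)"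
proof -
  let ?P = "Pi_pmf I d (\<lambda>_. p)" and ?h = "pmf p y"
  have E1: "measure_pmf.expectation ?P (\<lambda>X. indicator {y} (X k)) = ?h" if "k \<in> I" for k
  proof -
    have "(\<lambda>X. indicator {y} (X k) :: real) = indicator {X. X k \<in> {y}}"
      by (auto simp: indicator_def)
    thus ?thesis using measure_Pi_pmf_component[OF assms(1) that, of d "\<lambda>_. p" "{y}"]
      by (simp add: measure_pmf_single)
  qed
  have "measure_pmf.expectation ?P (\<lambda>X. indicator {y} (X i) * indicator {y} (X j))
      = (if i = j then ?h else ?h ^ 2)"
  proof (cases "i = j")
    case True
    have "(\<lambda>X. indicator {y} (X i) * indicator {y} (X j) :: real) = (\<lambda>X. indicator {y} (X i))"
      using True by (auto simp: indicator_def)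
    thus ?thesis using E1[OF assms(2)] True by simp
  next
    case False
    have "(\<lambda>X. indicator {y} (X i) * indicator {y} (X j) :: real)
        = indicator {X. X i \<in> {y} \<and> X j \<in> {y}}"
      by (auto simp: indicator_def)
    thus ?thesis
      using False measure_Pi_pmf_two_components[OF assms False, of d "\<lambda>_. p" "{y}" "{y}"]
      by (simp add: measure_pmf_single power2_eq_square)
  qed
  moreover have "integrable ?P (\<lambda>X. indicator {y} (X k) :: real)" for k
    by (rule measure_pmf.integrable_const_bound[where B=1]) (auto simp: indicator_def)
  moreover have "integrable ?P (\<lambda>X. indicator {y} (X i) * indicator {y} (X j) :: real)"
    by (rule measure_pmf.integrable_const_bound[where B=1]) (auto simp: indicator_def)
  ultimately show ?thesis using E1 assms
    by (simp add: algebra_simps power2_eq_square)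
qed

lemma expectation_h_obs_sq_dev:
  assumes "0 < n"
  shows "measure_pmf.expectation (Pi_pmf {..<n} d (\<lambda>_. p)) (\<lambda>X. (h_obs n X y - pmf p y)\<^sup>2)
       = pmf p y * (1 - pmf p y) / n"
proof -
  let ?P = "Pi_pmf {..<n} d (\<lambda>_. p)" and ?h = "pmf p y"
  have "(h_obs n X y - ?h)\<^sup>2
      = (\<Sum>i<n. \<Sum>j<n. (indicator {y} (X i) - ?h) * (indicator {y} (X j) - ?h)) / n\<^sup>2" for X
  proof -
    have "h_obs n X y - ?h = (\<Sum>i<n. indicator {y} (X i) - ?h) / n"
      using assms by (simp add: h_obs_eq_sum_indicator sum_subtractf field_simps)
    thus ?thesis by (simp add: power2_eq_square sum_product power_divide)
  qed
  hence "measure_pmf.expectation ?P (\<lambda>X. (h_obs n X y - ?h)\<^sup>2)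
      = (\<Sum>i<n. \<Sum>j<n. measure_pmf.expectation ?P
           (\<lambda>X. (indicator {y} (X i) - ?h) * (indicator {y} (X j) - ?h))) / n\<^sup>2"
    by (simp add: Bochner_Integration.integral_sum integrable_Pi_pmf_centered_indicators
          Bochner_Integration.integrable_sum)
  also have "\<dots> = (\<Sum>i<n. ?h * (1 - ?h)) / n\<^sup>2"
    by (simp add: expectation_Pi_pmf_centered_indicators)
  finally show ?thesis using assms by (simp add: power2_eq_square)
qed

(* Division by zero yields 0, so cells with q x = 0 contribute nothing. *)
definition chi2_trunc :: "nat \<Rightarrow> (nat \<Rightarrow> real) \<Rightarrow> (nat \<Rightarrow> real) \<Rightarrow> real" where
  "chi2_trunc K p q = (\<Sum>x<K. (p x - q x)\<^sup>2 / q x)"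

lemma ennreal_measure_pmf_atLeast:
  "ennreal (measure_pmf.prob q {K..}) = (\<Sum>x. ennreal (if K \<le> x then pmf q x else 0))"
  by (simp add: measure_pmf.emeasure_eq_measure[symmetric] nn_integral_measure_pmf
      nn_integral_count_space_nat flip: nn_integral_indicator) (intro suminf_cong, simp)

lemma chi2_eq_chi2_trunc_plus_tail:
  assumes "\<And>x. pmf q x = 0 \<Longrightarrow> p x = 0" and "\<And>x. K \<le> x \<Longrightarrow> p x = 0"
  shows "chi2 p (pmf q) = ennreal (chi2_trunc K p (pmf q) + measure_pmf.prob q {K..})"
proof -
  define a where "a x = ennreal (if x < K then (p x - pmf q x)\<^sup>2 / pmf q x else 0)" for x
  define b where "b x = ennreal (if K \<le> x then pmf q x else 0)" for x
  have "chi2 p (pmf q) = (\<Sum>x. a x + b x)"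
    unfolding chi2_def a_def b_def using assms by (intro suminf_cong) (auto simp: power2_eq_square)
  also have "\<dots> = (\<Sum>x. a x) + (\<Sum>x. b x)"
    by (rule suminf_add[symmetric]) auto
  also have "(\<Sum>x. a x) = (\<Sum>x<K. a x)"
    by (rule suminf_finite) (auto simp: a_def)
  also have "\<dots> = ennreal (chi2_trunc K p (pmf q))"
    unfolding a_def chi2_trunc_def by (simp add: sum_ennreal)
  also have "(\<Sum>x. b x) = ennreal (measure_pmf.prob q {K..})"
    unfolding b_def by (rule ennreal_measure_pmf_atLeast[symmetric])
  finally show ?thesis
    by (simp add: chi2_trunc_def sum_nonneg ennreal_plus)
qed

lemma integrable_h_obs_sq_dev:
  "integrable (Pi_pmf I d (\<lambda>_. p)) (\<lambda>X. (h_obs n X x - pmf p x)\<^sup>2)"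
proof (rule measure_pmf.integrable_const_bound[where B=1])
  have "\<bar>h_obs n X x - pmf p x\<bar> \<le> 1" for X
    using h_obs_nonneg[of n X x] h_obs_le_1[of n X x] pmf_nonneg[of p x] pmf_le_1[of p x]
    by (simp only: abs_le_iff) arith
  thus "AE X in Pi_pmf I d (\<lambda>_. p). norm ((h_obs n X x - pmf p x)\<^sup>2) \<le> 1"
    by (auto simp: abs_square_le_1)
qed simp

lemma integrable_chi2_trunc_h_obs:
  "integrable (Pi_pmf I d (\<lambda>_. p)) (\<lambda>X. chi2_trunc K (h_obs n X) (pmf p))"
  unfolding chi2_trunc_def by (simp add: Bochner_Integration.integrable_sum integrable_h_obs_sq_dev)

lemma expectation_chi2_trunc_h_obs_le:
  assumes "0 < n"
  shows "measure_pmf.expectation (Pi_pmf {..<n} d (\<lambda>_. p)) (\<lambda>X. chi2_trunc K (h_obs n X) (pmf p))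
       \<le> K / n"
proof -
  let ?P = "Pi_pmf {..<n} d (\<lambda>_. p)"
  have "measure_pmf.expectation ?P (\<lambda>X. chi2_trunc K (h_obs n X) (pmf p))
      = (\<Sum>x<K. pmf p x * (1 - pmf p x) / n / pmf p x)"
    unfolding chi2_trunc_def using assms integrable_h_obs_sq_dev
    by (subst Bochner_Integration.integral_sum)
       (auto intro!: sum.cong simp: expectation_h_obs_sq_dev)
  also have "\<dots> \<le> (\<Sum>x<K. 1 / n)"
  proof (intro sum_mono)
    fix x
    show "pmf p x * (1 - pmf p x) / n / pmf p x \<le> 1 / n"
      using assms pmf_nonneg[of p x] by (cases "pmf p x = 0") (simp_all add: divide_right_mono)
  qed
  finally show ?thesis by simp
qed

lemma prob_chi2_trunc_h_obs_ge:
  assumes "0 < n" "0 < t"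
  shows "measure_pmf.prob (Pi_pmf {..<n} d (\<lambda>_. p)) {X. t \<le> chi2_trunc K (h_obs n X) (pmf p)}
       \<le> K / (n * t)"
proof -
  let ?P = "Pi_pmf {..<n} d (\<lambda>_. p)"
  have "measure_pmf.prob ?P {X. t \<le> chi2_trunc K (h_obs n X) (pmf p)}
      \<le> measure_pmf.expectation ?P (\<lambda>X. chi2_trunc K (h_obs n X) (pmf p)) / t"
    using integral_Markov_inequality_measure[OF integrable_chi2_trunc_h_obs, where A=UNIV and c=t]
      assms(2)
    by (simp add: chi2_trunc_def sum_nonneg)
  also have "\<dots> \<le> K / n / t"
    using assms expectation_chi2_trunc_h_obs_le by (intro divide_right_mono) auto
  finally show ?thesis by simp
qed

lemma prob_chi2_h_obs_le:
  assumes "0 < n" "0 < t"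
  shows "1 - n * measure_pmf.prob p {K..} - K / (n * t)
       \<le> measure_pmf.prob (Pi_pmf {..<n} d (\<lambda>_. p))
           {X. chi2 (h_obs n X) (pmf p) \<le> ennreal (t + measure_pmf.prob p {K..})}"
proof -
  let ?P = "Pi_pmf {..<n} d (\<lambda>_. p)" and ?tail = "measure_pmf.prob p {K..}"
  define G where "G = {X. chi2 (h_obs n X) (pmf p) \<le> ennreal (t + ?tail)}"
  define large where "large = {X. \<exists>i\<in>{..<n}. X i \<in> {K..}}"
  define deviant where "deviant = {X. t \<le> chi2_trunc K (h_obs n X) (pmf p)}"
  have "X \<in> G \<union> large \<union> deviant" if X: "X \<in> set_pmf ?P" for X
  proof (cases "X \<in> large \<union> deviant")
    case False
    have "X i \<in> set_pmf p" if "i < n" for i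
      using X that by (auto simp: set_Pi_pmf PiE_dflt_def)
    hence "chi2 (h_obs n X) (pmf p) = ennreal (chi2_trunc K (h_obs n X) (pmf p) + ?tail)"
      using False unfolding large_def
      by (intro chi2_eq_chi2_trunc_plus_tail h_obs_eq_0) (auto simp: set_pmf_eq)
    also have "\<dots> \<le> ennreal (t + ?tail)"
      using False unfolding deviant_def by (intro ennreal_leI) auto
    finally show ?thesis unfolding G_def by simp
  qed simp
  hence "1 \<le> measure_pmf.prob ?P (G \<union> large \<union> deviant)"
    using measure_pmf.finite_measure_mono[of "set_pmf ?P" "G \<union> large \<union> deviant" ?P]
      measure_Int_set_pmf[of ?P UNIV] by auto
  also have "\<dots> \<le> measure_pmf.prob ?P G + measure_pmf.prob ?P large
                  + measure_pmf.prob ?P deviant"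
    using measure_Un_le[of "G \<union> large" ?P deviant] measure_Un_le[of G ?P large] by simp
  also have "measure_pmf.prob ?P large \<le> n * ?tail"
    unfolding large_def using measure_Pi_pmf_ex_component_le[of "{..<n}" d p "{K..}"] by simp
  also have "measure_pmf.prob ?P deviant \<le> K / (n * t)"
    unfolding deviant_def using assms by (rule prob_chi2_trunc_h_obs_ge)
  finally show ?thesis unfolding G_def by simp
qed

lemma measure_pmf_le_ennreal_mono:
  assumes "a \<le> b"
  shows "measure_pmf.prob P {x. f x \<le> ennreal a} \<le> measure_pmf.prob P {x. f x \<le> ennreal b}"
  using assms by (intro measure_pmf.finite_measure_mono) (auto intro: order.trans[OF _ ennreal_leI])

lemma prob_chi2_h_obs_le_log:
  assumes n: "0 < n" and \<delta>: "0 < \<delta>" "\<delta> < 1" and A: "1 \<le> A"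
    and tail: "\<And>K. measure_pmf.prob p {K..} \<le> A * exp (- real K)"
  shows "1 - \<delta> \<le> measure_pmf.prob (Pi_pmf {..<n} d (\<lambda>_. p))
           {X. chi2 (h_obs n X) (pmf p) \<le> ennreal ((2 * ln (2 * real n * A / \<delta>) + 3) / (n * \<delta>))}"
proof -
  \<comment> \<open>K and t are chosen so that both exceptional events have probability at most \<delta>/2.\<close>
  define \<kappa> where "\<kappa> = ln (2 * real n * A / \<delta>)"
  define K where "K = nat \<lceil>\<kappa>\<rceil>"
  define t where "t = 2 * K / (n * \<delta>)"
  have "1 \<le> real n * A" using n A mult_mono[of 1 "real n" 1 A] by simp
  hence nA: "\<delta> < 2 * real n * A" using \<delta> by linarith
  hence "0 < \<kappa>" unfolding \<kappa>_def using \<delta> by (intro ln_gt_zero) (simp add: less_divide_eq)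
  hence K: "\<kappa> \<le> K" "K \<le> \<kappa> + 1" "0 < K" unfolding K_def by linarith+
  have "exp (- \<kappa>) = \<delta> / (2 * real n * A)"
  proof -
    have "0 < 2 * real n * A / \<delta>" by (rule divide_pos_pos) (use nA \<delta> in linarith)+
    thus ?thesis unfolding \<kappa>_def by (simp add: exp_minus)
  qed
  hence "n * (A * exp (- \<kappa>)) = \<delta> / 2"
    using n A by simp
  moreover have "A * exp (- real K) \<le> A * exp (- \<kappa>)"
    using K(1) A by (intro mult_left_mono) auto
  hence "measure_pmf.prob p {K..} \<le> A * exp (- \<kappa>)"
    using tail[of K] by linarith
  hence "n * measure_pmf.prob p {K..} \<le> n * (A * exp (- \<kappa>))"
    by (rule mult_left_mono) simp
  ultimately have large: "n * measure_pmf.prob p {K..} \<le> \<delta> / 2" by simp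
  have t: "0 < t" unfolding t_def using n \<delta> K(3) by simp
  have deviant: "K / (n * t) = \<delta> / 2"
    unfolding t_def using n \<delta> K(3) by (simp add: field_simps)
  have "t + measure_pmf.prob p {K..} \<le> 2 * (\<kappa> + 1) / (n * \<delta>) + 1 / (n * \<delta>)"
  proof (intro add_mono)
    show "t \<le> 2 * (\<kappa> + 1) / (n * \<delta>)"
      unfolding t_def using K(2) n \<delta> by (intro divide_right_mono) auto
    have "\<delta> * \<delta> \<le> 2" using \<delta> mult_le_one[of \<delta> \<delta>] by simp
    hence "\<delta> / 2 \<le> 1 / \<delta>" using \<delta> by (simp add: field_simps)
    have "measure_pmf.prob p {K..} \<le> \<delta> / 2 / n"
      using large n by (simp add: field_simps)
    also have "\<dots> \<le> 1 / \<delta> / n"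
      using \<open>\<delta> / 2 \<le> 1 / \<delta>\<close> by (rule divide_right_mono) simp
    finally show "measure_pmf.prob p {K..} \<le> 1 / (n * \<delta>)"
      by (simp add: mult.commute)
  qed
  hence threshold: "t + measure_pmf.prob p {K..} \<le> (2 * \<kappa> + 3) / (n * \<delta>)"
    by (simp add: add_divide_distrib ac_simps)
  have "1 - \<delta> \<le> measure_pmf.prob (Pi_pmf {..<n} d (\<lambda>_. p))
           {X. chi2 (h_obs n X) (pmf p) \<le> ennreal (t + measure_pmf.prob p {K..})}"
    using prob_chi2_h_obs_le[OF n t, of p K d] large deviant by linarith
  also have "\<dots> \<le> measure_pmf.prob (Pi_pmf {..<n} d (\<lambda>_. p))
           {X. chi2 (h_obs n X) (pmf p) \<le> ennreal ((2 * \<kappa> + 3) / (n * \<delta>))}"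
    using threshold by (rule measure_pmf_le_ennreal_mono)
  finally show ?thesis unfolding \<kappa>_def .
qed

lemma add_le_mult_exp_ln_div:
  fixes a L :: real
  assumes "exp 1 \<le> a" "0 \<le> L"
  shows "a + L \<le> a * exp (L * ln a / a)"
proof -
  have a: "0 < a" using assms(1) exp_gt_zero[of 1] by linarith
  have "1 \<le> ln a" using assms(1) a by (subst ln_ge_iff) auto
  hence "L / a \<le> L * ln a / a"
    using a assms(2) mult_left_mono[of 1 "ln a" L] by (intro divide_right_mono) auto
  also have "\<dots> \<le> exp (L * ln a / a) - 1"
    using exp_ge_add_one_self[of "L * ln a / a"] by linarith
  finally show ?thesis using a by (simp add: field_simps)
qed

lemma log_rate_le_powr_rate:
  fixes n :: nat and \<delta> A s :: real
  assumes n: "exp 1 \<le> ln n" and \<delta>: "0 < \<delta>" "\<delta> < 1" and A: "1 \<le> A" and s: "1 \<le> s"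
  shows "(2 * ln (2 * real n * A / \<delta>) + 3) / (n * \<delta>)
       \<le> (2 * ln (2 * A) + 5) * (1 / n) * ln n powr s * \<delta> powr (- 1 - ln (ln n) / ln n)"
proof -
  define a where "a = ln n"
  define L where "L = - ln \<delta>"
  define D where "D = exp (L * ln a / a)"
  have a: "exp 1 \<le> a" "1 \<le> a"
    using n exp_ge_add_one_self[of 1] unfolding a_def by auto
  have n0: "0 < n"
    using n by (cases "n = 0") auto
  have L: "0 \<le> L" unfolding L_def using \<delta> by simp
  have "1 \<le> D" unfolding D_def using a L by auto
  hence aD: "1 \<le> a * D" using a by (metis mult_mono' mult_1 zero_le_one)
  have "2 * ln (2 * real n * A / \<delta>) + 3 = 2 * (a + L) + (2 * ln (2 * A) + 3)"
    unfolding a_def L_def using n0 \<delta> A by (simp add: ln_div ln_mult)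
  also have "\<dots> \<le> 2 * (a * D) + (2 * ln (2 * A) + 3) * (a * D)"
    using add_le_mult_exp_ln_div[OF a(1) L] mult_left_mono[OF aD, of "2 * ln (2 * A) + 3"] A
    by (intro add_mono) (auto simp: D_def)
  also have "\<dots> = (2 * ln (2 * A) + 5) * a * D" by (simp add: algebra_simps)
  also have "\<dots> \<le> (2 * ln (2 * A) + 5) * a powr s * D"
    using a s A \<open>1 \<le> D\<close>
    by (intro mult_right_mono mult_left_mono) (auto intro: powr_mono[of 1 s a, simplified])
  finally have numerator:
    "2 * ln (2 * real n * A / \<delta>) + 3 \<le> (2 * ln (2 * A) + 5) * a powr s * D" .
  have "\<delta> powr (- 1 - ln a / a) = exp L * D"
    unfolding powr_def D_def L_def using \<delta> a by (simp add: field_simps flip: exp_add)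
  hence "D / \<delta> = \<delta> powr (- 1 - ln a / a)"
    unfolding L_def using \<delta> by (simp add: exp_minus field_simps)
  moreover have "(2 * ln (2 * real n * A / \<delta>) + 3) / (n * \<delta>)
      \<le> (2 * ln (2 * A) + 5) * (1 / n) * a powr s * (D / \<delta>)"
    using divide_right_mono[OF numerator, of "n * \<delta>"] n0 \<delta> by (simp add: field_simps)
  ultimately show ?thesis unfolding a_def by (simp only: mult.assoc)
qed

theorem chi2_h_obs_poisson_mix_le:
  assumes \<theta>: "0 \<le> \<theta>" and n: "exp (exp 1) \<le> real n" and \<delta>: "0 < \<delta>" "\<delta> < 1"
    and Q: "prob_space Q" "sets Q = sets borel" "AE t in Q. t \<in> {0..\<theta>}"
  shows "1 - \<delta> \<le> measure_pmf.prob (Pi_pmf {..<n} d (\<lambda>_. poisson_mix_pmf Q))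
           {X. chi2 (h_obs n X) (poisson_mix Q) \<le>
               ennreal ((2 * exp 1 * \<theta> + 7) * (1 / real n) * ln (real n) powr (\<theta> + 4)
                        * \<delta> powr (- 1 - ln (ln (real n)) / ln (real n)))}"
proof -
  define A where "A = exp (exp 1 * \<theta>)"
  have A: "1 \<le> A" unfolding A_def using \<theta> by simp
  have "0 < real n" using n exp_gt_zero[of "exp 1"] by linarith
  hence n0: "0 < n" and ln_n: "exp 1 \<le> ln (real n)"
    using n by (simp_all add: ln_ge_iff)
  have supp: "AE t in Q. 0 \<le> t" "AE t in Q. t \<le> \<theta>"
    using Q(3) by auto
  have tail: "measure_pmf.prob (poisson_mix_pmf Q) {K..} \<le> A * exp (- real K)" for K
    unfolding A_def by (rule measure_poisson_mix_pmf_atLeast_le[OF Q(1,2) supp(1) \<theta> supp(2)])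
  have "2 * ln (2 * A) + 5 \<le> 2 * exp 1 * \<theta> + 7"
    unfolding A_def using ln_2_less_1 by (simp add: ln_mult)
  hence "(2 * ln (2 * A) + 5) * (1 / real n) * ln (real n) powr (\<theta> + 4)
          * \<delta> powr (- 1 - ln (ln (real n)) / ln (real n))
      \<le> (2 * exp 1 * \<theta> + 7) * (1 / real n) * ln (real n) powr (\<theta> + 4)
          * \<delta> powr (- 1 - ln (ln (real n)) / ln (real n))"
    by (intro mult_right_mono) auto
  with log_rate_le_powr_rate[OF ln_n \<delta> A, of "\<theta> + 4"] \<theta>
  have "(2 * ln (2 * real n * A / \<delta>) + 3) / (n * \<delta>)
      \<le> (2 * exp 1 * \<theta> + 7) * (1 / real n) * ln (real n) powr (\<theta> + 4)
          * \<delta> powr (- 1 - ln (ln (real n)) / ln (real n))"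
    by simp
  with prob_chi2_h_obs_le_log[OF n0 \<delta> A tail, of d] show ?thesis
    by (simp add: pmf_poisson_mix_pmf[OF Q(1,2) supp(1)])
       (elim order.trans measure_pmf_le_ennreal_mono)
qed

theorem lemma2:
  fixes \<theta> :: real
  assumes "\<theta> > 0"
  shows "\<exists>C>0. \<exists>N. \<forall>n\<ge>N. \<forall>\<delta>::real. 0 < \<delta> \<and> \<delta> < 1 \<longrightarrow>
    (\<forall>Q :: real measure. prob_space Q \<and> sets Q = sets borel \<and> emeasure Q {0..\<theta>} = 1 \<longrightarrow>
      measure_pmf.prob (Pi_pmf {..<n} 0 (\<lambda>_. poisson_mix_pmf Q))
        {X. chi2 (h_obs n X) (poisson_mix Q) \<le>
            ennreal (C * (1 / real n) * ln (real n) powr (\<theta> + 4)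
                     * \<delta> powr (- 1 - ln (ln (real n)) / ln (real n)))}
      \<ge> 1 - \<delta>)"
proof (intro exI[of _ "2 * exp 1 * \<theta> + 7"] conjI exI[of _ "nat \<lceil>exp (exp 1) :: real\<rceil>"]
    allI impI)
  show "0 < 2 * exp 1 * \<theta> + 7" using assms by (simp add: add_pos_pos)
next
  fix n :: nat and \<delta> :: real and Q :: "real measure"
  assume "nat \<lceil>exp (exp 1) :: real\<rceil> \<le> n" and "0 < \<delta> \<and> \<delta> < 1"
    and "prob_space Q \<and> sets Q = sets borel \<and> emeasure Q {0..\<theta>} = 1"
  moreover from this(3) have "AE t in Q. t \<in> {0..\<theta>}"
    by (intro prob_space.AE_prob_1) (auto simp: prob_space.emeasure_space_1 measure_def)
  ultimately show "1 - \<delta> \<le> measure_pmf.prob (Pi_pmf {..<n} 0 (\<lambda>_. poisson_mix_pmf Q))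
      {X. chi2 (h_obs n X) (poisson_mix Q) \<le>
          ennreal ((2 * exp 1 * \<theta> + 7) * (1 / real n) * ln (real n) powr (\<theta> + 4)
                   * \<delta> powr (- 1 - ln (ln (real n)) / ln (real n)))}"
    using assms real_nat_ceiling_ge[of "exp (exp 1)"]
    by (intro chi2_h_obs_poisson_mix_le) auto
qed

end
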